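(* For every integer $n\ge1$, $$D(n):=\sum_{\substack{1\le d\le n\\ d\equiv n \bmod 2}} d\binom{n}{\frac{n-d}2}^2=\begin{cases} n\binom{n-1}{\frac{n-1}2}^2 & n\text{ odd},\\[4pt] n\binom{n-1}{\frac n2}^2 & n\text{ even}.\end{cases}$$ *)

theory Defs
  imports Main
begin

end

theory Submission
  imports Defs
begin

text \<open>Substituting \<open>d = n - 2k\<close> turns the sum into \<open>\<Sum>\<^sub>k (n - 2k) C(n,k)\<^sup>2\<close> over
  \<open>k \<le> (n-1) div 2\<close>, and this sum telescopes: writing \<open>A = C(n-1,k)\<close>, \<open>B = C(n-1,k-1)\<close>,
  Pascal's rule \<open>C(n,k) = A + B\<close> and the absorption identities \<open>k C(n,k) = n B\<close>,
  \<open>(n-k) C(n,k) = n A\<close> give \<open>(n - 2k) C(n,k)\<^sup>2 = n (A - B)(A + B) = n A\<^sup>2 - n B\<^sup>2\<close>.\<close>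

lemma binomial_square_telescope_step:
  fixes n k :: nat
  assumes "2 * Suc k \<le> n"
  shows "(n - 2 * Suc k) * (n choose Suc k)^2 + n * ((n - 1) choose k)^2
         = n * ((n - 1) choose Suc k)^2"
proof -
  define A where "A = int ((n - 1) choose Suc k)"
  define B where "B = int ((n - 1) choose k)"
  define C where "C = int (n choose Suc k)"
  obtain p where n: "n = Suc p" using assms by (cases n) auto
  have pascal: "C = A + B" unfolding A_def B_def C_def n by simp
  have absorb: "(int k + 1) * C = int n * B"
    using binomial_absorption[of k n, THEN arg_cong[of _ _ int]]
    unfolding B_def C_def by (simp add: algebra_simps)
  have absorb_comp: "(int n - (int k + 1)) * C = int n * A"
    using binomial_absorb_comp[of n "Suc k", THEN arg_cong[of _ _ int]] assms
    unfolding A_def C_def by (simp add: of_nat_diff add.commute)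
  have "(int n - 2 * (int k + 1)) * C^2 = ((int n - (int k + 1)) * C - (int k + 1) * C) * C"
    by (simp add: power2_eq_square algebra_simps)
  also have "\<dots> = int n * (A - B) * (A + B)"
    using absorb absorb_comp pascal by (simp add: algebra_simps)
  finally have "(int n - 2 * (int k + 1)) * C^2 + int n * B^2 = int n * A^2"
    by (simp add: power2_eq_square algebra_simps)
  then have "int ((n - 2 * Suc k) * (n choose Suc k)^2 + n * ((n - 1) choose k)^2)
      = int (n * ((n - 1) choose Suc k)^2)"
    using assms unfolding A_def B_def C_def by (simp add: of_nat_diff add.commute)
  then show ?thesis
    by (simp only: of_nat_eq_iff)
qed

lemma sum_binomial_square_telescope:
  fixes n m :: nat
  assumes "2 * m \<le> n"
  shows "(\<Sum>k\<le>m. (n - 2 * k) * (n choose k)^2) = n * ((n - 1) choose m)^2"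
  using assms
proof (induction m)
  case 0
  then show ?case by simp
next
  case (Suc m)
  then show ?case
    using binomial_square_telescope_step[of m n] by simp
qed

lemma sum_same_parity_reindex:
  fixes n :: nat
  assumes "n \<ge> 1"
  shows "sum f {d \<in> {1..n}. d mod 2 = n mod 2} = (\<Sum>k\<le>(n - 1) div 2. f (n - 2 * k))"
proof (rule sum.reindex_bij_witness[where i = "\<lambda>k. n - 2 * k" and j = "\<lambda>d. (n - d) div 2"])
  fix d assume "d \<in> {d \<in> {1..n}. d mod 2 = n mod 2}"
  then have d: "1 \<le> d" "d \<le> n" "d mod 2 = n mod 2" by auto
  have "n = 2 * (n div 2) + n mod 2" "d = 2 * (d div 2) + d mod 2" by simp_all
  then have "n - d = 2 * (n div 2 - d div 2)" using d by linarith
  then have "2 * ((n - d) div 2) = n - d" by simp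
  then show "n - 2 * ((n - d) div 2) = d" using d by simp
  then show "f (n - 2 * ((n - d) div 2)) = f d" by simp
  show "(n - d) div 2 \<in> {..(n - 1) div 2}" using d by (simp add: div_le_mono)
next
  fix k assume "k \<in> {..(n - 1) div 2}"
  then have k: "2 * k < n" using assms by auto
  then show "(n - (n - 2 * k)) div 2 = k" by simp
  have "(n - 2 * k) mod 2 = (n - 2 * k + 2 * k) mod 2" by simp
  then show "n - 2 * k \<in> {d \<in> {1..n}. d mod 2 = n mod 2}" using k by simp
qed

lemma choose_pred_half_even:
  fixes n :: nat
  assumes "even n"
  shows "(n - 1) choose (n div 2) = (n - 1) choose ((n - 1) div 2)"
proof (cases "n = 0")
  case False
  then have "n - 1 - n div 2 = (n - 1) div 2" "n div 2 \<le> n - 1"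
    using assms by (auto elim!: evenE)
  then show ?thesis by (metis binomial_symmetric)
qed simp

theorem mainTheorem9:
  fixes n :: nat
  assumes "n \<ge> 1"
  shows "(\<Sum>d\<in>{d \<in> {1..n}. d mod 2 = n mod 2}. d * (n choose ((n - d) div 2))^2)
         = (if odd n then n * ((n - 1) choose ((n - 1) div 2))^2
            else n * ((n - 1) choose (n div 2))^2)"
proof -
  let ?m = "(n - 1) div 2"
  have "(\<Sum>d\<in>{d \<in> {1..n}. d mod 2 = n mod 2}. d * (n choose ((n - d) div 2))^2)
      = (\<Sum>k\<le>?m. (n - 2 * k) * (n choose ((n - (n - 2 * k)) div 2))^2)"
    using sum_same_parity_reindex[OF assms] .
  also have "\<dots> = (\<Sum>k\<le>?m. (n - 2 * k) * (n choose k)^2)"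
    by (rule sum.cong) auto
  also have "\<dots> = n * ((n - 1) choose ?m)^2"
    using assms by (intro sum_binomial_square_telescope) auto
  finally show ?thesis
    using choose_pred_half_even[of n] by simp
qed

end
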